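(* Let $\nu<0$ and define $\widetilde{\mathcal{R}}_\nu:\mathbb{R}\to\mathbb{R}$ by $$\widetilde{\mathcal{R}}_\nu(x):=\frac{D_{\nu-1}(x)^2}{D_\nu(x)\,D_{\nu-2}(x)},\qquad x\in\mathbb{R},$$ where $D_\alpha$ denotes the parabolic cylinder function of index $\alpha$. Then $\widetilde{\mathcal{R}}_\nu$ is strictly decreasing on $\mathbb{R}$, and $$1<\widetilde{\mathcal{R}}_\nu(x)<\frac{\nu-1}{\nu}\qquad\text{for all }x\in\mathbb{R}.$$
   Context: For $\alpha<0$, the parabolic cylinder function $D_\alpha:\mathbb{R}\to\mathbb{R}$ is given by $$D_\alpha(x)=\frac{e^{-x^2/4}}{\Gamma(-\alpha)}\int_0^\infty t^{-\alpha-1}e^{-\frac{t^2}{2}-xt}\,dt,\qquad x\in\mathbb{R},$$ where $\Gamma$ is Euler's Gamma function. In particular $D_\alpha(x)>0$ for all $x$ when $\alpha<0$. *)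

theory Defs
  imports "HOL-Analysis.Analysis"
begin

text \<open>Parabolic cylinder function for negative index alpha, via its integral
representation (only meaningful for alpha < 0).\<close>
definition pcf :: "real \<Rightarrow> real \<Rightarrow> real" where
  "pcf \<alpha> x = exp (- (x\<^sup>2) / 4) / Gamma (- \<alpha>) *
     integral {0<..} (\<lambda>t. t powr (- \<alpha> - 1) * exp (- (t\<^sup>2) / 2 - x * t))"

definition Rtilde :: "real \<Rightarrow> real \<Rightarrow> real" where
  "Rtilde \<nu> x = (pcf (\<nu> - 1) x)\<^sup>2 / (pcf \<nu> x * pcf (\<nu> - 2) x)"

end

theory Submission
  imports Defs "HOL-Real_Asymp.Real_Asymp"
begin

text \<open>
  Write K_s(c, x) = int_0^oo t^(s-1) exp (- c t^2/2 - x t) dt (this is gauss_mellin s c x) and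
  a = - nu. Then D_(-a)(x) = exp (- x^2/4) K_a(1, x) / Gamma(a), so that
  Rtilde_nu = (a + 1)/a * K_(a+1)^2 / (K_a K_(a+2)), all at c = 1.

  The upper bound is the Cauchy-Schwarz inequality K_(s+1)^2 < K_s K_(s+2). The lower bound is the
  same inequality one index higher, combined with the recurrence K_(s+2) = s K_s - x K_(s+1) that
  comes from an integration by parts.

  For the monotonicity, substituting u = t l in the double integral K_r K_q gives
    K_r(1, x) K_q(1, x) = int_0^oo l^(r-1) (1 + l)^(-r-q) K_(r+q)(c(l), x) dl,
  where c(l) = (1 + l^2)/(1 + l)^2 = 1/(1 + 2l/(1 + l^2)). Used for (r, q) = (a, a+2), (a+2, a)
  and (a+1, a+1), this exhibits K_(a+1)^2 / (K_a K_(a+2)) as the mean of 2l/(1 + l^2) against a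
  weight on l > 0. Replacing x_1 by x_2 > x_1 multiplies the weight by
  K_m(c(l), x_2) / K_m(c(l), x_1), which increases with c and so decreases as 2l/(1 + l^2) grows;
  by Chebyshev's integral inequality the mean decreases.
\<close>

definition gauss_mellin_kernel :: "real \<Rightarrow> real \<Rightarrow> real \<Rightarrow> real \<Rightarrow> real" where
  "gauss_mellin_kernel s c x t =
     (if 0 < t then t powr (s - 1) * exp (- (c * t\<^sup>2) / 2 - x * t) else 0)"

definition gauss_mellin :: "real \<Rightarrow> real \<Rightarrow> real \<Rightarrow> real" where
  "gauss_mellin s c x = (\<integral>t. gauss_mellin_kernel s c x t \<partial>lborel)"

lemma gauss_mellin_kernel_measurable [measurable]:
  "gauss_mellin_kernel s c x \<in> borel_measurable borel"
  unfolding gauss_mellin_kernel_def by measurable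

lemma gauss_mellin_kernel_nonneg: "0 \<le> gauss_mellin_kernel s c x t"
  by (simp add: gauss_mellin_kernel_def)

lemma gauss_mellin_kernel_pos: "0 < t \<Longrightarrow> 0 < gauss_mellin_kernel s c x t"
  by (simp add: gauss_mellin_kernel_def)

lemma gauss_mellin_kernel_shift_powr:
  "gauss_mellin_kernel (s + r) c x t = t powr r * gauss_mellin_kernel s c x t"
proof (cases "0 < t")
  case True
  have "t powr (s + r - 1) = t powr r * t powr (s - 1)"
    by (simp add: powr_add[symmetric] algebra_simps)
  then show ?thesis
    using True by (simp add: gauss_mellin_kernel_def)
qed (simp add: gauss_mellin_kernel_def)

lemma gauss_mellin_kernel_shift:
  "gauss_mellin_kernel (s + 1) c x t = t * gauss_mellin_kernel s c x t"
  "gauss_mellin_kernel (s + 2) c x t = t\<^sup>2 * gauss_mellin_kernel s c x t"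
  using gauss_mellin_kernel_shift_powr[of s 1 c x t] gauss_mellin_kernel_shift_powr[of s 2 c x t]
  by (cases "0 < t"; simp add: gauss_mellin_kernel_def)+

lemma integrable_gauss_mellin_kernel_Gamma:
  assumes "s > 0"
  shows "integrable lborel (gauss_mellin_kernel s 0 1)"
proof -
  have "(\<integral>\<^sup>+t. ennreal (t powr (s - 1) / exp t) * indicator {0..} t \<partial>lborel) = ennreal (Gamma s)"
    by (rule nn_integral_has_integral_lebesgue'[OF _ Gamma_integral_real[OF assms]]) auto
  moreover have "ennreal (gauss_mellin_kernel s 0 1 t) = ennreal (t powr (s - 1) / exp t) * indicator {0..} t"
    for t
    by (auto simp: gauss_mellin_kernel_def indicator_def exp_minus field_simps)
  ultimately show ?thesis
    by (intro integrableI_nn_integral_finite[where x = "Gamma s"])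
       (auto simp: gauss_mellin_kernel_nonneg)
qed

lemma gauss_mellin_kernel_le_Gamma:
  assumes "c > 0"
  shows "gauss_mellin_kernel s c x t \<le> exp ((1 - x)\<^sup>2 / (2 * c)) * gauss_mellin_kernel s 0 1 t"
proof (cases "0 < t")
  case True
  have "0 \<le> (c * t - (1 - x))\<^sup>2" by simp
  then have "- (c * t\<^sup>2) / 2 - x * t \<le> (1 - x)\<^sup>2 / (2 * c) + (- t)"
    using assms by (simp add: field_simps power2_eq_square)
  then have "exp (- (c * t\<^sup>2) / 2 - x * t) \<le> exp ((1 - x)\<^sup>2 / (2 * c)) * exp (- t)"
    by (simp add: exp_add[symmetric])
  then show ?thesis
    using True by (simp add: gauss_mellin_kernel_def mult_left_mono mult.left_commute)
qed (simp add: gauss_mellin_kernel_def)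

lemma integrable_gauss_mellin_kernel:
  assumes "s > 0" "c > 0"
  shows "integrable lborel (gauss_mellin_kernel s c x)"
proof (rule Bochner_Integration.integrable_bound)
  show "integrable lborel (\<lambda>t. exp ((1 - x)\<^sup>2 / (2 * c)) * gauss_mellin_kernel s 0 1 t)"
    using integrable_gauss_mellin_kernel_Gamma[OF assms(1)] by simp
  show "AE t in lborel. norm (gauss_mellin_kernel s c x t)
          \<le> norm (exp ((1 - x)\<^sup>2 / (2 * c)) * gauss_mellin_kernel s 0 1 t)"
    using gauss_mellin_kernel_le_Gamma[OF assms(2)] gauss_mellin_kernel_nonneg
    by (auto intro!: AE_I2 order_trans[OF _ abs_ge_self])
qed simp

lemma integral_pos_if_pos_on_interval:
  fixes f :: "real \<Rightarrow> real"
  assumes "integrable lborel f" "\<And>y. 0 \<le> f y" "p < q" "\<And>y. p \<le> y \<Longrightarrow> y \<le> q \<Longrightarrow> 0 < f y"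
  shows "0 < integral\<^sup>L lborel f"
proof -
  have "integral\<^sup>L lborel f \<noteq> 0"
  proof
    assume "integral\<^sup>L lborel f = 0"
    then have "AE y in lborel. f y = 0"
      using integral_nonneg_eq_0_iff_AE assms by auto
    then have "AE y in lborel. y \<notin> {p..q}"
      by eventually_elim (use assms in force)
    then obtain N where N: "{y \<in> space lborel. \<not> y \<notin> {p..q}} \<subseteq> N"
      "emeasure lborel N = 0" "N \<in> sets lborel"
      by (rule AE_E)
    then have "emeasure lborel {p..q} \<le> emeasure lborel N"
      by (intro emeasure_mono) auto
    with N(2) have "emeasure lborel {p..q} \<le> 0"
      by simp
    with assms(3) show False by simp
  qed
  moreover have "0 \<le> integral\<^sup>L lborel f"
    by (simp add: assms integral_nonneg)
  ultimately show ?thesis by linarith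
qed

lemma gauss_mellin_pos:
  assumes "s > 0" "c > 0"
  shows "0 < gauss_mellin s c x"
  unfolding gauss_mellin_def
  by (rule integral_pos_if_pos_on_interval[of _ 1 2])
     (auto simp: integrable_gauss_mellin_kernel[OF assms] gauss_mellin_kernel_nonneg
        gauss_mellin_kernel_pos)

lemma pcf_eq_gauss_mellin:
  assumes "\<alpha> < 0"
  shows "pcf \<alpha> x = exp (- (x\<^sup>2) / 4) / Gamma (- \<alpha>) * gauss_mellin (- \<alpha>) 1 x"
proof -
  have "integral {0<..} (\<lambda>t. t powr (- \<alpha> - 1) * exp (- (t\<^sup>2) / 2 - x * t))
      = integral UNIV (gauss_mellin_kernel (- \<alpha>) 1 x)"
    by (subst integral_restrict_UNIV[symmetric])
       (auto intro!: arg_cong[where f = "integral UNIV"] simp: gauss_mellin_kernel_def)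
  also have "\<dots> = gauss_mellin (- \<alpha>) 1 x"
    unfolding gauss_mellin_def using assms
    by (intro integral_lborel integrable_gauss_mellin_kernel) auto
  finally show ?thesis
    by (simp add: pcf_def)
qed

lemma gauss_mellin_sq_less:
  assumes "s > 0" "c > 0"
  shows "(gauss_mellin (s + 1) c x)\<^sup>2 < gauss_mellin s c x * gauss_mellin (s + 2) c x"
proof -
  define k where "k = gauss_mellin (s + 1) c x / gauss_mellin s c x"
  note int = integrable_gauss_mellin_kernel[OF assms]
    integrable_gauss_mellin_kernel[of "s + 1"] integrable_gauss_mellin_kernel[of "s + 2"]
  have square: "gauss_mellin_kernel s c x t * (t - k)\<^sup>2 = gauss_mellin_kernel (s + 2) c x t
      - 2 * k * gauss_mellin_kernel (s + 1) c x t + k\<^sup>2 * gauss_mellin_kernel s c x t" for t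
    unfolding gauss_mellin_kernel_shift by (simp add: power2_eq_square algebra_simps)
  have "0 < (\<integral>t. gauss_mellin_kernel s c x t * (t - k)\<^sup>2 \<partial>lborel)"
  proof (rule integral_pos_if_pos_on_interval[of _ "\<bar>k\<bar> + 1" "\<bar>k\<bar> + 2"])
    show "integrable lborel (\<lambda>t. gauss_mellin_kernel s c x t * (t - k)\<^sup>2)"
      unfolding square using int assms by auto
    show "0 < gauss_mellin_kernel s c x t * (t - k)\<^sup>2" if "\<bar>k\<bar> + 1 \<le> t" for t
      using that by (intro mult_pos_pos gauss_mellin_kernel_pos) auto
  qed (auto simp: gauss_mellin_kernel_nonneg)
  also have "\<dots> = gauss_mellin (s + 2) c x - 2 * k * gauss_mellin (s + 1) c x
      + k\<^sup>2 * gauss_mellin s c x"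
    unfolding square gauss_mellin_def using int assms by simp
  finally show ?thesis
    using gauss_mellin_pos[OF assms, of x] by (simp add: k_def field_simps power2_eq_square)
qed

lemma gauss_mellin_recurrence:
  assumes s: "s > 0"
  shows "gauss_mellin (s + 2) 1 x = s * gauss_mellin s 1 x - x * gauss_mellin (s + 1) 1 x"
proof -
  define E where "E t = exp (- (t\<^sup>2) / 2 - x * t)" for t :: real
  define F where "F t = t powr s * E t" for t :: real
  define f where "f t = s * (t powr (s - 1) * E t) - t powr (s + 1) * E t - x * (t powr s * E t)"
    for t :: real
  define g where "g t = s * gauss_mellin_kernel s 1 x t - gauss_mellin_kernel (s + 2) 1 x t
      - x * gauss_mellin_kernel (s + 1) 1 x t" for t
  have g: "indicator {0<..} t *\<^sub>R f t = g t" for t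
    by (auto simp: f_def g_def gauss_mellin_kernel_def E_def indicator_def ac_simps)
  have int: "integrable lborel g"
    unfolding g_def using s
    by (intro Bochner_Integration.integrable_diff integrable_mult_right
        integrable_gauss_mellin_kernel) auto
  have "(LBINT t=0..\<infinity>. f t) = 0 - 0"
  proof (rule interval_integral_FTC_integrable)
    fix t :: real assume "0 < ereal t" "ereal t < \<infinity>"
    then have t: "t > 0" by simp
    have "(F has_real_derivative (s * t powr (s - 1) * E t + t powr s * (E t * (- (2 * t) / 2 - x))))
        (at t)"
      unfolding F_def E_def using t by (auto intro!: derivative_eq_intros simp: power2_eq_square)
    moreover have "s * t powr (s - 1) * E t + t powr s * (E t * (- (2 * t) / 2 - x)) = f t"
      using t by (simp add: f_def powr_add algebra_simps)
    ultimately show "(F has_vector_derivative f t) (at t)"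
      by (simp add: has_real_derivative_iff_has_vector_derivative)
    show "isCont f t"
      unfolding f_def E_def using t by (intro continuous_intros) auto
  next
    have "einterval 0 \<infinity> = {0<..}"
      by (auto simp: einterval_def zero_ereal_def)
    then show "set_integrable lborel (einterval 0 \<infinity>) f"
      unfolding set_integrable_def using int g by simp
    show "((F \<circ> real_of_ereal) \<longlongrightarrow> 0) (at_right 0)"
      unfolding zero_ereal_def ereal_tendsto_simps F_def E_def using s by real_asymp
    show "((F \<circ> real_of_ereal) \<longlongrightarrow> 0) (at_left \<infinity>)"
      unfolding ereal_tendsto_simps F_def E_def by real_asymp
  qed simp
  moreover have "(LBINT t=0..\<infinity>. f t) = (\<integral>t. g t \<partial>lborel)"
    unfolding interval_lebesgue_integral_0_infty set_lebesgue_integral_def g ..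
  moreover have "(\<integral>t. g t \<partial>lborel)
      = s * gauss_mellin s 1 x - gauss_mellin (s + 2) 1 x - x * gauss_mellin (s + 1) 1 x"
    unfolding g_def gauss_mellin_def using s by (simp add: integrable_gauss_mellin_kernel)
  ultimately show ?thesis by simp
qed

lemma gauss_mellin_scale:
  assumes "k > 0"
  shows "gauss_mellin s c x = k powr s * gauss_mellin s (c * k\<^sup>2) (x * k)"
proof -
  have kernel: "gauss_mellin_kernel s c x (k * u)
      = k powr (s - 1) * gauss_mellin_kernel s (c * k\<^sup>2) (x * k) u" for u
    using assms by (auto simp: gauss_mellin_kernel_def powr_mult zero_less_mult_iff
        power_mult_distrib algebra_simps)
  have "gauss_mellin s c x = \<bar>k\<bar> *\<^sub>R (\<integral>u. gauss_mellin_kernel s c x (0 + k * u) \<partial>lborel)"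
    unfolding gauss_mellin_def using assms by (intro lborel_integral_real_affine) auto
  also have "\<dots> = k * (\<integral>u. k powr (s - 1) * gauss_mellin_kernel s (c * k\<^sup>2) (x * k) u \<partial>lborel)"
    using assms by (simp add: kernel)
  also have "\<dots> = k powr s * gauss_mellin s (c * k\<^sup>2) (x * k)"
    using assms by (simp add: gauss_mellin_def powr_diff)
  finally show ?thesis .
qed

text \<open>Integrating w(y) w(y') (A y - A y') (B y - B y') over the plane gives
  2 (int w * int w A B - int w A * int w B).\<close>

lemma chebyshev_integral_less:
  fixes w A B :: "real \<Rightarrow> real"
  assumes int: "integrable lborel w" "integrable lborel (\<lambda>y. w y * A y)"
      "integrable lborel (\<lambda>y. w y * B y)" "integrable lborel (\<lambda>y. w y * A y * B y)"
    and similarly_ordered: "\<And>y y'. 0 \<le> w y * w y' * ((A y - A y') * (B y - B y'))"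
    and "p < q" "p' < q'"
    and strict: "\<And>y y'. p \<le> y \<Longrightarrow> y \<le> q \<Longrightarrow> p' \<le> y' \<Longrightarrow> y' \<le> q' \<Longrightarrow>
         0 < w y * w y' * ((A y - A y') * (B y - B y'))"
  shows "(\<integral>y. w y * A y \<partial>lborel) * (\<integral>y. w y * B y \<partial>lborel)
       < (\<integral>y. w y \<partial>lborel) * (\<integral>y. w y * A y * B y \<partial>lborel)"
proof -
  define I IA IB IAB where "I = (\<integral>y. w y \<partial>lborel)" and "IA = (\<integral>y. w y * A y \<partial>lborel)"
    and "IB = (\<integral>y. w y * B y \<partial>lborel)" and "IAB = (\<integral>y. w y * A y * B y \<partial>lborel)"
  define H where "H y y' = w y * w y' * ((A y - A y') * (B y - B y'))" for y y'
  have H_eq: "H y = (\<lambda>y'. w y * (A y * B y) * w y' - (w y * A y) * (w y' * B y')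
      - (w y * B y) * (w y' * A y') + w y * (w y' * A y' * B y'))" for y
    by (auto simp: H_def fun_eq_iff algebra_simps)
  have H_int: "integrable lborel (H y)" for y
    unfolding H_eq using int by auto
  define h where "h y = (\<integral>y'. H y y' \<partial>lborel)" for y
  have h_eq: "h y = w y * (A y * B y) * I - (w y * A y) * IB - (w y * B y) * IA + w y * IAB" for y
    unfolding h_def H_eq I_def IA_def IB_def IAB_def using int by simp
  have "0 < (\<integral>y. h y \<partial>lborel)"
  proof (rule integral_pos_if_pos_on_interval[of _ p q])
    show "integrable lborel h"
      unfolding h_eq using int
      by (intro Bochner_Integration.integrable_add Bochner_Integration.integrable_diff
          integrable_mult_left) (auto simp: mult.assoc)
    show "0 \<le> h y" for y
      unfolding h_def by (simp add: H_def similarly_ordered)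
    show "0 < h y" if "p \<le> y" "y \<le> q" for y
      unfolding h_def using H_int \<open>p' < q'\<close>
      by (intro integral_pos_if_pos_on_interval[of _ p' q'])
         (auto simp: H_eq[symmetric] H_def similarly_ordered strict that)
  qed fact
  also have "(\<integral>y. h y \<partial>lborel) = (\<integral>y. I * (w y * A y * B y) - IB * (w y * A y)
      - IA * (w y * B y) + IAB * w y \<partial>lborel)"
    by (rule Bochner_Integration.integral_cong) (simp_all add: h_eq algebra_simps)
  also have "\<dots> = 2 * (I * IAB - IA * IB)"
    using int by (simp add: I_def IA_def IB_def IAB_def)
  finally show ?thesis
    by (simp add: I_def IA_def IB_def IAB_def)
qed

lemma gauss_mellin_ratio_strict_mono:
  assumes s: "s > 0" and c: "0 < c" "c < c'" and x: "x\<^sub>1 < x\<^sub>2"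
  shows "gauss_mellin s c x\<^sub>2 / gauss_mellin s c x\<^sub>1 < gauss_mellin s c' x\<^sub>2 / gauss_mellin s c' x\<^sub>1"
proof -
  define w where "w = gauss_mellin_kernel s c x\<^sub>1"
  define A where "A t = exp (- ((c' - c) * t\<^sup>2) / 2)" for t :: real
  define B where "B t = exp (- ((x\<^sub>2 - x\<^sub>1) * t))" for t :: real
  have wA: "(\<lambda>t. w t * A t) = gauss_mellin_kernel s c' x\<^sub>1"
    and wB: "(\<lambda>t. w t * B t) = gauss_mellin_kernel s c x\<^sub>2"
    and wAB: "(\<lambda>t. w t * A t * B t) = gauss_mellin_kernel s c' x\<^sub>2"
    by (auto simp: fun_eq_iff w_def A_def B_def gauss_mellin_kernel_def mult.assoc
        exp_add[symmetric] algebra_simps diff_divide_distrib)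
  have int: "integrable lborel w" "integrable lborel (\<lambda>t. w t * A t)"
      "integrable lborel (\<lambda>t. w t * B t)" "integrable lborel (\<lambda>t. w t * A t * B t)"
    unfolding wA wB wAB unfolding w_def using s c by (auto intro: integrable_gauss_mellin_kernel)
  have A_anti: "A t' < A t" if "0 < t" "t < t'" for t t'
  proof -
    have "t\<^sup>2 < t'\<^sup>2" using that by (intro power_strict_mono) auto
    then show ?thesis using c by (simp add: A_def)
  qed
  have B_anti: "B t' < B t" if "t < t'" for t t'
    using that x by (simp add: B_def)
  have same_sign: "0 \<le> (A t - A t') * (B t - B t')" if "0 < t" "0 < t'" for t t'
    using that A_anti[of t t'] A_anti[of t' t] B_anti[of t t'] B_anti[of t' t]
    by (cases t t' rule: linorder_cases) (auto intro: mult_nonneg_nonneg mult_nonpos_nonpos)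
  have "(\<integral>t. w t * A t \<partial>lborel) * (\<integral>t. w t * B t \<partial>lborel)
       < (\<integral>t. w t \<partial>lborel) * (\<integral>t. w t * A t * B t \<partial>lborel)"
  proof (rule chebyshev_integral_less[OF int, of 1 2 3 4])
    show "0 \<le> w t * w t' * ((A t - A t') * (B t - B t'))" for t t'
      using same_sign[of t t'] by (cases "0 < t \<and> 0 < t'") (auto simp: w_def gauss_mellin_kernel_def)
    show "0 < w t * w t' * ((A t - A t') * (B t - B t'))" if "1 \<le> t" "t \<le> 2" "3 \<le> t'" for t t'
      using that A_anti[of t t'] B_anti[of t t'] unfolding w_def
      by (intro mult_pos_pos gauss_mellin_kernel_pos) auto
  qed simp_all
  then have "gauss_mellin s c' x\<^sub>1 * gauss_mellin s c x\<^sub>2 < gauss_mellin s c x\<^sub>1 * gauss_mellin s c' x\<^sub>2"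
    unfolding wA wB wAB by (simp add: gauss_mellin_def w_def)
  then show ?thesis
    using s c gauss_mellin_pos[of s c x\<^sub>1] gauss_mellin_pos[of s c' x\<^sub>1]
    by (simp add: divide_less_eq less_divide_eq mult.commute)
qed

lemma nn_integral_gauss_mellin_kernel:
  assumes "s > 0" "c > 0"
  shows "(\<integral>\<^sup>+t. ennreal (gauss_mellin_kernel s c x t) \<partial>lborel) = ennreal (gauss_mellin s c x)"
  unfolding gauss_mellin_def using integrable_gauss_mellin_kernel[OF assms]
  by (intro nn_integral_eq_integral) (auto simp: gauss_mellin_kernel_nonneg)

lemma gauss_mellin_kernel_mult_dilated:
  assumes "0 < l"
  shows "gauss_mellin_kernel q 1 x t * t * gauss_mellin_kernel r 1 x (t * l)
       = l powr (r - 1) * gauss_mellin_kernel (r + q) (1 + l\<^sup>2) (x * (1 + l)) t"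
proof (cases "0 < t")
  case True
  have "t powr (q - 1) * t powr 1 * t powr (r - 1) = t powr (r + q - 1)"
    by (simp only: powr_add[symmetric]) (simp add: algebra_simps)
  then have powers: "t powr (q - 1) * t * (t * l) powr (r - 1) = l powr (r - 1) * t powr (r + q - 1)"
    using True assms by (simp add: powr_mult mult_ac)
  have exps: "exp (- (t\<^sup>2) / 2 - x * t) * exp (- ((t * l)\<^sup>2) / 2 - x * (t * l))
      = exp (- ((1 + l\<^sup>2) * t\<^sup>2) / 2 - x * (1 + l) * t)"
    unfolding exp_add[symmetric] by (simp add: power_mult_distrib field_simps)
  have "gauss_mellin_kernel q 1 x t * t * gauss_mellin_kernel r 1 x (t * l)
      = (t powr (q - 1) * t * (t * l) powr (r - 1))
        * (exp (- (t\<^sup>2) / 2 - x * t) * exp (- ((t * l)\<^sup>2) / 2 - x * (t * l)))"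
    using True assms by (simp add: gauss_mellin_kernel_def mult_ac)
  also have "\<dots> = l powr (r - 1) * gauss_mellin_kernel (r + q) (1 + l\<^sup>2) (x * (1 + l)) t"
    unfolding powers exps using True by (simp add: gauss_mellin_kernel_def mult_ac)
  finally show ?thesis .
qed (simp add: gauss_mellin_kernel_def)

definition product_scale :: "real \<Rightarrow> real" where
  "product_scale l = (1 + l\<^sup>2) / (1 + l)\<^sup>2"

lemma product_scale_pos: "0 < l \<Longrightarrow> 0 < product_scale l"
  by (simp add: product_scale_def add_pos_nonneg)

lemma product_scale_less:
  assumes "0 < l" "0 < l'" "2 * l / (1 + l\<^sup>2) < 2 * l' / (1 + l'\<^sup>2)"
  shows "product_scale l' < product_scale l"
proof -
  have "product_scale l = 1 / (1 + 2 * l / (1 + l\<^sup>2))" if "0 < l" for l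
  proof -
    have "1 + l * l \<noteq> 0"
      using that by (metis add_pos_nonneg zero_less_one zero_le_square less_irrefl)
    then show ?thesis
      by (simp add: product_scale_def field_simps power2_eq_square)
  qed
  moreover have "0 \<le> 2 * l / (1 + l\<^sup>2)"
    using assms by simp
  ultimately show ?thesis
    using assms by (simp add: divide_strict_left_mono add_pos_nonneg)
qed

lemma two_mult_divide_one_plus_square_less:
  fixes l l' :: real
  assumes "0 < l" "l < l'" "l * l' < 1"
  shows "2 * l / (1 + l\<^sup>2) < 2 * l' / (1 + l'\<^sup>2)"
proof -
  have "0 < (l' - l) * (1 - l * l')"
    using assms by simp
  then have "l * (1 + l'\<^sup>2) < l' * (1 + l\<^sup>2)"
    by (simp add: algebra_simps power2_eq_square)
  then show ?thesis
    by (simp add: field_simps add_pos_nonneg)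
qed

text \<open>By product_density_eq this is K_m(1 + l^2, x (1 + l)), rescaled so that x enters only
  through the second argument of K_m.\<close>

definition product_density :: "real \<Rightarrow> real \<Rightarrow> real \<Rightarrow> real" where
  "product_density m x l =
     (if 0 < l then (1 + l) powr (- m) * gauss_mellin m (product_scale l) x else 0)"

lemma product_density_eq:
  assumes "0 < l"
  shows "product_density m x l = gauss_mellin m (1 + l\<^sup>2) (x * (1 + l))"
proof -
  have "gauss_mellin m (product_scale l) x
      = (1 + l) powr m * gauss_mellin m (product_scale l * (1 + l)\<^sup>2) (x * (1 + l))"
    using assms by (intro gauss_mellin_scale) simp
  also have "product_scale l * (1 + l)\<^sup>2 = 1 + l\<^sup>2"
    using assms by (simp add: product_scale_def)
  finally show ?thesis
    using assms by (simp add: product_density_def powr_minus)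
qed

lemma product_density_pos: "m > 0 \<Longrightarrow> 0 < l \<Longrightarrow> 0 < product_density m x l"
  by (simp add: product_density_def gauss_mellin_pos product_scale_pos)

lemma product_density_nonneg: "m > 0 \<Longrightarrow> 0 \<le> product_density m x l"
  using product_density_pos[of m l x] by (cases "0 < l") (auto simp: product_density_def)

lemma product_density_measurable [measurable]: "product_density m x \<in> borel_measurable borel"
  unfolding product_density_def product_scale_def gauss_mellin_def gauss_mellin_kernel_def
  by measurable

lemma nn_integral_gauss_mellin_kernel_dilated:
  assumes "s > 0" "c > 0" "t > 0"
  shows "(\<integral>\<^sup>+l. ennreal (t * gauss_mellin_kernel s c x (t * l)) \<partial>lborel) = ennreal (gauss_mellin s c x)"
proof -
  have "ennreal (gauss_mellin s c x) = (\<integral>\<^sup>+u. ennreal (gauss_mellin_kernel s c x u) \<partial>lborel)"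
    using nn_integral_gauss_mellin_kernel[OF assms(1,2)] by simp
  also have "\<dots> = \<bar>t\<bar> * (\<integral>\<^sup>+l. ennreal (gauss_mellin_kernel s c x (0 + t * l)) \<partial>lborel)"
    using assms(3) by (intro nn_integral_real_affine) auto
  also have "\<dots> = (\<integral>\<^sup>+l. ennreal (t * gauss_mellin_kernel s c x (t * l)) \<partial>lborel)"
    using assms(3) by (simp add: nn_integral_cmult ennreal_mult' flip: nn_integral_cmult)
  finally show ?thesis ..
qed

lemma nn_integral_gauss_mellin_kernel_mult_dilated:
  assumes "r > 0" "q > 0"
  shows "(\<integral>\<^sup>+t. ennreal (gauss_mellin_kernel q 1 x t * t * gauss_mellin_kernel r 1 x (t * l)) \<partial>lborel)
       = ennreal (l powr (r - 1) * product_density (r + q) x l)"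
proof (cases "0 < l")
  case True
  have "(\<integral>\<^sup>+t. ennreal (gauss_mellin_kernel q 1 x t * t * gauss_mellin_kernel r 1 x (t * l)) \<partial>lborel)
      = (\<integral>\<^sup>+t. ennreal (l powr (r - 1))
          * ennreal (gauss_mellin_kernel (r + q) (1 + l\<^sup>2) (x * (1 + l)) t) \<partial>lborel)"
    using True by (simp add: gauss_mellin_kernel_mult_dilated ennreal_mult' gauss_mellin_kernel_nonneg)
  also have "\<dots> = ennreal (l powr (r - 1) * product_density (r + q) x l)"
    using True assms by (simp add: nn_integral_cmult nn_integral_gauss_mellin_kernel add_pos_nonneg
        product_density_eq ennreal_mult')
  finally show ?thesis .
next
  case False
  then have vanish: "gauss_mellin_kernel q 1 x t * t * gauss_mellin_kernel r 1 x (t * l) = 0" for t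
    by (cases "0 < t") (auto simp: gauss_mellin_kernel_def zero_less_mult_iff)
  show ?thesis
    using False by (simp add: vanish product_density_def)
qed

lemma gauss_mellin_mult_eq_integral:
  assumes r: "r > 0" and q: "q > 0"
  shows "integrable lborel (\<lambda>l. l powr (r - 1) * product_density (r + q) x l)"
    "(\<integral>l. l powr (r - 1) * product_density (r + q) x l \<partial>lborel) = gauss_mellin r 1 x * gauss_mellin q 1 x"
proof -
  define k where "k t l = gauss_mellin_kernel q 1 x t * t * gauss_mellin_kernel r 1 x (t * l)" for t l
  have inner: "ennreal (gauss_mellin_kernel q 1 x t) * ennreal (gauss_mellin r 1 x)
      = (\<integral>\<^sup>+l. ennreal (k t l) \<partial>lborel)" for t
  proof (cases "0 < t")
    case True
    then show ?thesis
      unfolding nn_integral_gauss_mellin_kernel_dilated[OF r zero_less_one True, symmetric]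
      by (simp add: k_def ennreal_mult' gauss_mellin_kernel_nonneg mult.assoc flip: nn_integral_cmult)
  qed (simp add: k_def gauss_mellin_kernel_def)
  have "ennreal (gauss_mellin r 1 x * gauss_mellin q 1 x)
      = ennreal (gauss_mellin q 1 x) * ennreal (gauss_mellin r 1 x)"
    using gauss_mellin_pos[OF q zero_less_one, of x] by (simp add: ennreal_mult' mult.commute)
  also have "\<dots> = (\<integral>\<^sup>+t. ennreal (gauss_mellin_kernel q 1 x t) * ennreal (gauss_mellin r 1 x) \<partial>lborel)"
    using q by (simp add: nn_integral_multc nn_integral_gauss_mellin_kernel)
  also have "\<dots> = (\<integral>\<^sup>+t. \<integral>\<^sup>+l. ennreal (k t l) \<partial>lborel \<partial>lborel)"
    by (simp add: inner)
  also have "\<dots> = (\<integral>\<^sup>+l. \<integral>\<^sup>+t. ennreal (k t l) \<partial>lborel \<partial>lborel)"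
    unfolding k_def
    by (subst lborel_pair.Fubini') (auto simp: case_prod_unfold cong: measurable_cong_sets)
  also have "\<dots> = (\<integral>\<^sup>+l. ennreal (l powr (r - 1) * product_density (r + q) x l) \<partial>lborel)"
    unfolding k_def using r q by (simp add: nn_integral_gauss_mellin_kernel_mult_dilated)
  finally have "(\<integral>\<^sup>+l. ennreal (l powr (r - 1) * product_density (r + q) x l) \<partial>lborel)
      = ennreal (gauss_mellin r 1 x * gauss_mellin q 1 x)" ..
  then show "integrable lborel (\<lambda>l. l powr (r - 1) * product_density (r + q) x l)"
    "(\<integral>l. l powr (r - 1) * product_density (r + q) x l \<partial>lborel) = gauss_mellin r 1 x * gauss_mellin q 1 x"
    using r q gauss_mellin_pos[of r 1 x] gauss_mellin_pos[of q 1 x]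
    by (subst (asm) nn_integral_eq_integrable; simp add: product_density_nonneg)+
qed

lemma integral_product_density_turan:
  fixes a x :: real
  assumes a: "a > 0"
  defines "v \<equiv> \<lambda>l. l powr (a - 1) * product_density (2 * a + 2) x l"
  shows "integrable lborel (\<lambda>l. v l * (1 + l\<^sup>2))"
    "(\<integral>l. v l * (1 + l\<^sup>2) \<partial>lborel) = 2 * (gauss_mellin a 1 x * gauss_mellin (a + 2) 1 x)"
    "integrable lborel (\<lambda>l. v l * (2 * l))"
    "(\<integral>l. v l * (2 * l) \<partial>lborel) = 2 * (gauss_mellin (a + 1) 1 x)\<^sup>2"
proof -
  define f where "f r l = l powr (r - 1) * product_density (2 * a + 2) x l" for r l
  have "a + (a + 2) = 2 * a + 2" "a + 2 + a = 2 * a + 2" "a + 1 + (a + 1) = 2 * a + 2"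
    by simp_all
  then have f: "integrable lborel (f a)" "integrable lborel (f (a + 2))" "integrable lborel (f (a + 1))"
    "(\<integral>l. f a l \<partial>lborel) = gauss_mellin a 1 x * gauss_mellin (a + 2) 1 x"
    "(\<integral>l. f (a + 2) l \<partial>lborel) = gauss_mellin a 1 x * gauss_mellin (a + 2) 1 x"
    "(\<integral>l. f (a + 1) l \<partial>lborel) = (gauss_mellin (a + 1) 1 x)\<^sup>2"
    using gauss_mellin_mult_eq_integral[of a "a + 2" x] gauss_mellin_mult_eq_integral[of "a + 2" a x]
      gauss_mellin_mult_eq_integral[of "a + 1" "a + 1" x] a
    by (simp_all add: f_def[abs_def] power2_eq_square mult.commute)
  have "l powr (a + 2 - 1) = l powr (a - 1) * l\<^sup>2" "l powr (a + 1 - 1) = l powr (a - 1) * l"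
    if "0 < l" for l
  proof -
    have "l powr (a - 1) * l powr 2 = l powr (a + 2 - 1)" "l powr (a - 1) * l powr 1 = l powr (a + 1 - 1)"
      by (simp_all only: powr_add[symmetric]) (simp_all add: algebra_simps)
    with that show "l powr (a + 2 - 1) = l powr (a - 1) * l\<^sup>2" "l powr (a + 1 - 1) = l powr (a - 1) * l"
      by (simp_all add: powr_numeral)
  qed
  then have v_eq: "v l * (1 + l\<^sup>2) = f a l + f (a + 2) l" "v l * (2 * l) = 2 * f (a + 1) l" for l
    by (cases "0 < l"; simp add: v_def f_def product_density_def algebra_simps)+
  show "integrable lborel (\<lambda>l. v l * (1 + l\<^sup>2))" "integrable lborel (\<lambda>l. v l * (2 * l))"
    unfolding v_eq using f by auto
  show "(\<integral>l. v l * (1 + l\<^sup>2) \<partial>lborel) = 2 * (gauss_mellin a 1 x * gauss_mellin (a + 2) 1 x)"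
    "(\<integral>l. v l * (2 * l) \<partial>lborel) = 2 * (gauss_mellin (a + 1) 1 x)\<^sup>2"
    unfolding v_eq using f by simp_all
qed

definition turan_ratio :: "real \<Rightarrow> real \<Rightarrow> real" where
  "turan_ratio a x = (gauss_mellin (a + 1) 1 x)\<^sup>2 / (gauss_mellin a 1 x * gauss_mellin (a + 2) 1 x)"

lemma turan_ratio_less_one:
  assumes "a > 0"
  shows "turan_ratio a x < 1"
  using gauss_mellin_sq_less[OF assms zero_less_one, of x] gauss_mellin_pos[of a 1 x]
    gauss_mellin_pos[of "a + 2" 1 x] assms
  by (simp add: turan_ratio_def)

text \<open>The Cauchy-Schwarz inequality K_(a+2)^2 < K_(a+1) K_(a+3), after eliminating K_(a+3) and
  one factor K_(a+2) by the recurrence, reads a K_a K_(a+2) < (a + 1) K_(a+1)^2.\<close>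

lemma turan_ratio_gt:
  assumes a: "a > 0"
  shows "a / (a + 1) < turan_ratio a x"
proof -
  define k\<^sub>0 k\<^sub>1 k\<^sub>2 k\<^sub>3 where "k\<^sub>0 = gauss_mellin a 1 x" and "k\<^sub>1 = gauss_mellin (a + 1) 1 x"
    and "k\<^sub>2 = gauss_mellin (a + 2) 1 x" and "k\<^sub>3 = gauss_mellin (a + 3) 1 x"
  have "k\<^sub>2\<^sup>2 < k\<^sub>1 * k\<^sub>3"
    using gauss_mellin_sq_less[of "a + 1" 1 x] a by (simp add: k\<^sub>1_def k\<^sub>2_def k\<^sub>3_def add.assoc)
  moreover have "k\<^sub>2 * k\<^sub>2 = (a * k\<^sub>0 - x * k\<^sub>1) * k\<^sub>2"
    using gauss_mellin_recurrence[OF a, of x] by (simp add: k\<^sub>0_def k\<^sub>1_def k\<^sub>2_def)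
  moreover have "k\<^sub>3 = (a + 1) * k\<^sub>1 - x * k\<^sub>2"
    using gauss_mellin_recurrence[of "a + 1" x] a by (simp add: k\<^sub>1_def k\<^sub>2_def k\<^sub>3_def add.assoc)
  ultimately have "a * (k\<^sub>0 * k\<^sub>2) < (a + 1) * k\<^sub>1\<^sup>2"
    by (simp add: power2_eq_square algebra_simps)
  then show ?thesis
    using a gauss_mellin_pos[of a 1 x] gauss_mellin_pos[of "a + 2" 1 x]
    by (simp add: turan_ratio_def k\<^sub>0_def k\<^sub>1_def k\<^sub>2_def field_simps)
qed

lemma turan_ratio_strict_antimono:
  assumes a: "a > 0" and x: "x\<^sub>1 < x\<^sub>2"
  shows "turan_ratio a x\<^sub>2 < turan_ratio a x\<^sub>1"
proof -
  define m where "m = 2 * a + 2"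
  have m: "m > 0" using a by (simp add: m_def)
  define G where "G \<gamma> = gauss_mellin m \<gamma> x\<^sub>2 / gauss_mellin m \<gamma> x\<^sub>1" for \<gamma>
  define v where "v y l = l powr (a - 1) * product_density m y l" for y l
  have v_x\<^sub>2: "v x\<^sub>2 l = v x\<^sub>1 l * G (product_scale l)" for l
    using gauss_mellin_pos[OF m, of "product_scale l" x\<^sub>1] product_scale_pos[of l]
    by (cases "0 < l") (auto simp: v_def product_density_def G_def)
  define w A B where "w l = v x\<^sub>1 l * (1 + l\<^sup>2)" and "A l = 2 * l / (1 + l\<^sup>2)"
    and "B l = - G (product_scale l)" for l :: real
  have "1 + l\<^sup>2 \<noteq> 0" for l :: real
    by (metis add_pos_nonneg less_numeral_extra(1) zero_le_power2 less_irrefl)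
  then have wA: "w l * A l = v x\<^sub>1 l * (2 * l)"
    and wB: "w l * B l = - (v x\<^sub>2 l * (1 + l\<^sup>2))"
    and wAB: "w l * A l * B l = - (v x\<^sub>2 l * (2 * l))" for l
    by (simp_all add: w_def A_def B_def v_x\<^sub>2)
  note I\<^sub>1 = integral_product_density_turan[OF a, of x\<^sub>1, folded m_def v_def]
    and I\<^sub>2 = integral_product_density_turan[OF a, of x\<^sub>2, folded m_def v_def]
  have int: "integrable lborel w" "integrable lborel (\<lambda>l. w l * A l)"
      "integrable lborel (\<lambda>l. w l * B l)" "integrable lborel (\<lambda>l. w l * A l * B l)"
    unfolding wAB unfolding wA wB unfolding w_def using I\<^sub>1 I\<^sub>2 by auto
  have w_pos: "0 < w l" if "0 < l" for l
    using that m by (simp add: w_def v_def product_density_pos add_pos_nonneg)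
  have B_less: "B l < B l'" if "0 < l" "0 < l'" "A l < A l'" for l l'
    using that gauss_mellin_ratio_strict_mono[OF m _ _ x] product_scale_less[of l l']
      product_scale_pos[of l'] by (simp add: A_def B_def G_def)
  have "(\<integral>l. w l * A l \<partial>lborel) * (\<integral>l. w l * B l \<partial>lborel)
       < (\<integral>l. w l \<partial>lborel) * (\<integral>l. w l * A l * B l \<partial>lborel)"
  proof (rule chebyshev_integral_less[OF int, of "1/4" "1/2" "3/4" 1])
    show "0 \<le> w l * w l' * ((A l - A l') * (B l - B l'))" for l l'
    proof (cases "0 < l \<and> 0 < l'")
      case True
      then have "0 \<le> (A l - A l') * (B l - B l')"
        using B_less[of l l'] B_less[of l' l]
        by (cases "A l" "A l'" rule: linorder_cases) (auto intro: mult_nonneg_nonneg mult_nonpos_nonpos)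
      with True show ?thesis
        using w_pos[of l] w_pos[of l'] by simp
    qed (auto simp: w_def v_def product_density_def)
    show "0 < w l * w l' * ((A l - A l') * (B l - B l'))"
      if "1/4 \<le> l" "l \<le> 1/2" "3/4 \<le> l'" "l' \<le> 1" for l l'
    proof -
      have "l * l' \<le> 1/2 * 1" using that by (intro mult_mono) auto
      then have "A l < A l'"
        using that unfolding A_def by (intro two_mult_divide_one_plus_square_less) auto
      then have "0 < (A l - A l') * (B l - B l')"
        using B_less[of l l'] that by (intro mult_neg_neg) auto
      then show ?thesis
        using that w_pos[of l] w_pos[of l'] by simp
    qed
  qed simp_all
  then have "(gauss_mellin a 1 x\<^sub>1 * gauss_mellin (a + 2) 1 x\<^sub>1) * (gauss_mellin (a + 1) 1 x\<^sub>2)\<^sup>2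
      < (gauss_mellin (a + 1) 1 x\<^sub>1)\<^sup>2 * (gauss_mellin a 1 x\<^sub>2 * gauss_mellin (a + 2) 1 x\<^sub>2)"
    unfolding wAB unfolding wA wB unfolding w_def using I\<^sub>1 I\<^sub>2 by simp
  then show ?thesis
    using a gauss_mellin_pos[of a 1] gauss_mellin_pos[of "a + 2" 1]
    by (simp add: turan_ratio_def divide_less_eq less_divide_eq mult.commute)
qed

lemma Rtilde_eq_turan_ratio:
  assumes a: "a > 0"
  shows "Rtilde (- a) x = (a + 1) / a * turan_ratio a x"
proof -
  define E where "E = exp (- (x\<^sup>2) / 4)"
  have "a \<notin> \<int>\<^sub>\<le>\<^sub>0" "a + 1 \<notin> \<int>\<^sub>\<le>\<^sub>0"
    using a nonpos_Ints_nonpos by force+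
  then have Gamma: "Gamma (a + 1) = a * Gamma a" "Gamma (a + 2) = (a + 1) * a * Gamma a"
    using Gamma_plus1[of a] Gamma_plus1[of "a + 1"] by (simp_all add: add.assoc)
  have pcf: "pcf (- a) x = E / Gamma a * gauss_mellin a 1 x"
    "pcf (- a - 1) x = E / Gamma (a + 1) * gauss_mellin (a + 1) 1 x"
    "pcf (- a - 2) x = E / Gamma (a + 2) * gauss_mellin (a + 2) 1 x"
    using pcf_eq_gauss_mellin[of "- a" x] pcf_eq_gauss_mellin[of "- a - 1" x]
      pcf_eq_gauss_mellin[of "- a - 2" x] a
    by (simp_all add: E_def add.commute)
  have "E \<noteq> 0" "Gamma a \<noteq> 0" "gauss_mellin a 1 x \<noteq> 0" "gauss_mellin (a + 2) 1 x \<noteq> 0"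
    using a Gamma_real_pos[OF a] gauss_mellin_pos[of a 1 x] gauss_mellin_pos[of "a + 2" 1 x]
    by (simp_all add: E_def less_imp_neq[symmetric])
  then show ?thesis
    unfolding Rtilde_def turan_ratio_def pcf Gamma using a by (simp add: field_simps power2_eq_square)
qed

theorem proposition3p3:
  fixes \<nu> :: real
  assumes "\<nu> < 0"
  shows "strict_antimono_on UNIV (Rtilde \<nu>) \<and>
         (\<forall>x::real. 1 < Rtilde \<nu> x \<and> Rtilde \<nu> x < (\<nu> - 1) / \<nu>)"
proof -
  define a where "a = - \<nu>"
  have a: "a > 0" and \<nu>: "\<nu> = - a"
    using assms by (simp_all add: a_def)
  have R: "Rtilde \<nu> x = (a + 1) / a * turan_ratio a x" for x
    unfolding \<nu> by (rule Rtilde_eq_turan_ratio[OF a])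
  have "strict_antimono_on UNIV (Rtilde \<nu>)"
    unfolding monotone_on_def R using a
    by (intro ballI impI mult_strict_left_mono turan_ratio_strict_antimono) auto
  moreover have "1 < Rtilde \<nu> x" for x
    unfolding R using turan_ratio_gt[OF a, of x] a by (simp add: field_simps)
  moreover have "Rtilde \<nu> x < (\<nu> - 1) / \<nu>" for x
  proof -
    have "(a + 1) / a * turan_ratio a x < (a + 1) / a * 1"
      using turan_ratio_less_one[OF a, of x] a by (intro mult_strict_left_mono) auto
    then show ?thesis
      unfolding R using a by (simp add: \<nu> field_simps)
  qed
  ultimately show ?thesis by blast
qed

end
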